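(* Let $K\ge 2$, and let $\boldsymbol{x}_k$, $r_f$, $\boldsymbol{f}_k$, $\boldsymbol{f}$, $\boldsymbol{\eta}^{(\ell)}$ be as in the context. Fix $\ell\le r_f$ and define $w^{(\ell)}=[\lambda_\ell(\operatorname{cov}(\boldsymbol{f}))]^{-1/2}(\boldsymbol{\eta}^{(\ell)})^\top\boldsymbol{f}$ and, for $k\le K$, $z_k^{(\ell)}=0$ if $\boldsymbol{\eta}_k^{(\ell)}=\boldsymbol{0}$ and $z_k^{(\ell)}=(\boldsymbol{\eta}_k^{(\ell)}/\|\boldsymbol{\eta}_k^{(\ell)}\|_F)^\top\boldsymbol{f}_k$ otherwise. For a real number $\alpha$, put $c=\alpha w^{(\ell)}$ and $d_k=z_k^{(\ell)}-c$ ($k\le K$). Let $\alpha^{(\ell)}$ be defined by: (C.1) $|\alpha^{(\ell)}|$ is the smallest value of $|\alpha|$ such that at least one pair $j\neq k$ satisfies $d_j\perp d_k$; (C.2) if (C.1) admits two values of $\alpha$, then $\alpha^{(\ell)}$ is the negative one. For $1\le j<k\le K$ let $$\Delta^{(\ell)}_{jk}=\big[\cos\{\theta(w^{(\ell)},z_j^{(\ell)})\}+\cos\{\theta(w^{(\ell)},z_k^{(\ell)})\}\big]^2-4\cos\{\theta(z_j^{(\ell)},z_k^{(\ell)})\}.$$ Then $\alpha^{(\ell)}$ exists (in particular, there is at least one pair $j<k$ with $\Delta^{(\ell)}_{jk}\ge 0$), and $$\alpha^{(\ell)}\in\operatorname*{argmin}_{\alpha^{(\ell)}_{jk}}\Big\{|\alpha^{(\ell)}_{jk}|:\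 \alpha^{(\ell)}_{jk}=\tfrac12\big[\cos\{\theta(w^{(\ell)},z_j^{(\ell)})\}+\cos\{\theta(w^{(\ell)},z_k^{(\ell)})\}-(\Delta^{(\ell)}_{jk})^{1/2}\big],\ \Delta^{(\ell)}_{jk}\ge0,\ 1\le j<k\le K\Big\}.$$
   Context: $\mathcal{L}_0^2$ denotes the vector space of real-valued random variables with zero mean and finite variance, endowed with the covariance as inner product; $\|x\|=\sqrt{\operatorname{var}(x)}$, $\perp$ means zero covariance, and $\theta(x,y)$ is the angle in this inner product space, so $\cos\{\theta(x,y)\}=\operatorname{corr}(x,y)$ with the convention $\operatorname{corr}(x,0)=0$. $\boldsymbol{x}_1,\dots,\boldsymbol{x}_K$ are random vectors ($\boldsymbol{x}_k\in\mathbb{R}^{p_k}$) with entries in $\mathcal{L}_0^2$; $\operatorname{span}(\boldsymbol{x}_k^\top)$ is the subspace spanned by the entries of $\boldsymbol{x}_k$, of dimension $r_k\ge1$; $r_f=\dim\sum_k\operatorname{span}(\boldsymbol{x}_k^\top)$. $\boldsymbol{f}_k\in\mathbb{R}^{r_k}$ is a random vector whose entries form an orthonormal basis of $\operatorname{span}(\boldsymbol{x}_k^\top)$, $\boldsymbol{f}=(\boldsymbol{f}_1^\top,\dots,\boldsymbol{f}_K^\top)^\top$, and $\boldsymbol{\eta}^{(1)},\dots,\boldsymbol{\eta}^{(r_f)}$ are orthonormal eigenvectors of $\operatorname{cov}(\boldsymbol{f})$, $\boldsymbol{\eta}^{(\ell)}$ corresponding to its $\ell$th largest eigenvalue $\lambda_\ell(\operatorname{cov}(\boldsymbol{f}))$,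 partitioned as $\boldsymbol{\eta}^{(\ell)}=((\boldsymbol{\eta}^{(\ell)}_1)^\top,\dots,(\boldsymbol{\eta}^{(\ell)}_K)^\top)^\top$ with $\boldsymbol{\eta}^{(\ell)}_k\in\mathbb{R}^{r_k}$. *)

theory Defs
  imports "HOL-Analysis.Analysis"
begin

text \<open>The space L_0^2 with covariance inner product is modelled by an abstract
real inner product space 'a. corr x y is the cosine of the angle, with the
convention corr x 0 = corr 0 y = 0.\<close>

definition corr :: "'a::real_inner \<Rightarrow> 'a \<Rightarrow> real" where
  "corr x y = (if x = 0 \<or> y = 0 then 0 else inner x y / (norm x * norm y))"

text \<open>Index set of the stacked vector f = (f_1,...,f_K): pairs (k,i), k<K, i<r k (0-based).\<close>

definition idx :: "nat \<Rightarrow> (nat \<Rightarrow> nat) \<Rightarrow> (nat \<times> nat) set" where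
  "idx K r = Sigma {..<K} (\<lambda>k. {..<r k})"

definition covf :: "(nat \<Rightarrow> nat \<Rightarrow> 'a::real_inner) \<Rightarrow> nat \<times> nat \<Rightarrow> nat \<times> nat \<Rightarrow> real" where
  "covf f p q = inner (f (fst p) (snd p)) (f (fst q) (snd q))"

definition wvec :: "nat \<Rightarrow> (nat \<Rightarrow> nat) \<Rightarrow> (nat \<Rightarrow> nat \<Rightarrow> 'a::real_inner)
    \<Rightarrow> real \<Rightarrow> (nat \<times> nat \<Rightarrow> real) \<Rightarrow> 'a" where
  "wvec K r f lam eta = inverse (sqrt lam) *\<^sub>R (\<Sum>p\<in>idx K r. eta p *\<^sub>R f (fst p) (snd p))"

definition blocknorm :: "(nat \<Rightarrow> nat) \<Rightarrow> (nat \<times> nat \<Rightarrow> real) \<Rightarrow> nat \<Rightarrow> real" where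
  "blocknorm r eta k = sqrt (\<Sum>i<r k. (eta (k, i))\<^sup>2)"

definition zvec :: "(nat \<Rightarrow> nat) \<Rightarrow> (nat \<Rightarrow> nat \<Rightarrow> 'a::real_inner)
    \<Rightarrow> (nat \<times> nat \<Rightarrow> real) \<Rightarrow> nat \<Rightarrow> 'a" where
  "zvec r f eta k = (if (\<forall>i<r k. eta (k, i) = 0) then 0
     else (\<Sum>i<r k. (eta (k, i) / blocknorm r eta k) *\<^sub>R f k i))"

definition orth_alphas :: "nat \<Rightarrow> 'a::real_inner \<Rightarrow> (nat \<Rightarrow> 'a) \<Rightarrow> real set" where
  "orth_alphas K w z = {a. \<exists>j<K. \<exists>k<K. j \<noteq> k \<and> inner (z j - a *\<^sub>R w) (z k - a *\<^sub>R w) = 0}"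

definition is_alpha :: "nat \<Rightarrow> 'a::real_inner \<Rightarrow> (nat \<Rightarrow> 'a) \<Rightarrow> real \<Rightarrow> bool" where
  "is_alpha K w z a \<longleftrightarrow>
     a \<in> orth_alphas K w z \<and> (\<forall>b\<in>orth_alphas K w z. \<bar>a\<bar> \<le> \<bar>b\<bar>) \<and>
     (a \<noteq> 0 \<and> - a \<in> orth_alphas K w z \<longrightarrow> a < 0)"

definition Delta :: "'a::real_inner \<Rightarrow> (nat \<Rightarrow> 'a) \<Rightarrow> nat \<Rightarrow> nat \<Rightarrow> real" where
  "Delta w z j k = (corr w (z j) + corr w (z k))\<^sup>2 - 4 * corr (z j) (z k)"

definition cand_alphas :: "nat \<Rightarrow> 'a::real_inner \<Rightarrow> (nat \<Rightarrow> 'a) \<Rightarrow> real set" where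
  "cand_alphas K w z = {(corr w (z j) + corr w (z k) - sqrt (Delta w z j k)) / 2 | j k.
      j < k \<and> k < K \<and> Delta w z j k \<ge> 0}"

end

theory Submission
  imports Defs "HOL-Library.Quadratic_Discriminant" "Jordan_Normal_Form.Determinant"
begin

text \<open>Since w is a unit vector and each z k is a unit vector or zero, the inner product of
  z j - \<alpha> w and z k - \<alpha> w is the monic quadratic
  \<alpha>^2 - (corr w (z j) + corr w (z k)) \<alpha> + corr (z j) (z k), whose discriminant is Delta w z j k;
  so the admissible \<alpha> are exactly the real roots of these quadratics. As w is an
  eigen-combination of the f's, it has nonnegative inner product with every z k, so the sums
  corr w (z j) + corr w (z k) are nonnegative and the smaller root of each quadratic has the smaller modulus;
  equal moduli only occur for roots \<plusminus>t/2, a tie that (C.2) breaks in favour of the smaller one.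
  A real root exists because w is a combination of the nonzero z k with positive weights: at
  \<alpha> = 1 / (sum of the weights) the weighted sum of the z k - \<alpha> w vanishes, which forces a
  nonpositive inner product, hence a real root, for some pair j \<noteq> k.\<close>

lemma corr_commute: "corr x y = corr y x"
  by (auto simp: corr_def inner_commute mult.commute)

lemma Delta_commute: "Delta w z j k = Delta w z k j"
  by (simp add: Delta_def corr_commute add.commute)

lemma corr_eq_inner:
  assumes "x = 0 \<or> norm x = 1" and "y = 0 \<or> norm y = 1"
  shows "corr x y = inner x y"
  using assms by (auto simp: corr_def)

lemma monic_quadratic_eq_0_iff:
  fixes a s c :: real
  shows "a\<^sup>2 - s * a + c = 0 \<longleftrightarrow> 0 \<le> s\<^sup>2 - 4 * c \<and>
    (a = (s - sqrt (s\<^sup>2 - 4 * c)) / 2 \<or> a = (s + sqrt (s\<^sup>2 - 4 * c)) / 2)"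
  using discriminant_iff[of 1 a "- s" c] by (auto simp: discrim_def)

definition lower_root :: "'a::real_inner \<Rightarrow> (nat \<Rightarrow> 'a) \<Rightarrow> nat \<Rightarrow> nat \<Rightarrow> real" where
  "lower_root w z j k = (corr w (z j) + corr w (z k) - sqrt (Delta w z j k)) / 2"

definition upper_root :: "'a::real_inner \<Rightarrow> (nat \<Rightarrow> 'a) \<Rightarrow> nat \<Rightarrow> nat \<Rightarrow> real" where
  "upper_root w z j k = (corr w (z j) + corr w (z k) + sqrt (Delta w z j k)) / 2"

lemma lower_root_commute: "lower_root w z j k = lower_root w z k j"
  by (simp add: lower_root_def Delta_commute add.commute)

lemma upper_root_commute: "upper_root w z j k = upper_root w z k j"
  by (simp add: upper_root_def Delta_commute add.commute)

lemma cand_alphas_eq: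
  "cand_alphas K w z = {lower_root w z j k | j k. j < k \<and> k < K \<and> 0 \<le> Delta w z j k}"
  by (simp add: cand_alphas_def lower_root_def)

lemma finite_cand_alphas: "finite (cand_alphas K w z)"
proof (rule finite_subset)
  show "cand_alphas K w z \<subseteq> (\<lambda>(j, k). lower_root w z j k) ` ({..<K} \<times> {..<K})"
    by (force simp: cand_alphas_eq)
qed simp

lemma abs_diff_le_add:
  fixes s t :: real
  assumes "0 \<le> s" and "0 \<le> t"
  shows "\<bar>s - t\<bar> \<le> s + t" and "s + t \<le> \<bar>s - t\<bar> \<Longrightarrow> t = 0 \<or> (s = 0 \<and> 0 < t)"
  using assms by (auto simp: abs_if split: if_splits)

lemma exists_inner_nonpos_pair:
  fixes d :: "nat \<Rightarrow> 'a::real_inner"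
  assumes K: "2 \<le> K" and pos: "\<And>k. k < K \<Longrightarrow> 0 < \<beta> k"
    and sum_0: "(\<Sum>k<K. \<beta> k *\<^sub>R d k) = 0"
  shows "\<exists>j<K. \<exists>k<K. j \<noteq> k \<and> inner (d j) (d k) \<le> 0"
proof (rule ccontr)
  assume "\<not> ?thesis"
  then have off_diag: "\<And>j k. j < K \<Longrightarrow> k < K \<Longrightarrow> j \<noteq> k \<Longrightarrow> 0 < inner (d j) (d k)"
    by force
  define g where "g j k = \<beta> j * \<beta> k * inner (d j) (d k)" for j k
  have g_nonneg: "0 \<le> g j k" if "j < K" "k < K" for j k
    using that pos[OF that(1)] pos[OF that(2)] off_diag[OF that]
    by (cases "j = k") (simp_all add: g_def)
  have "0 = inner (\<Sum>j<K. \<beta> j *\<^sub>R d j) (\<Sum>k<K. \<beta> k *\<^sub>R d k)"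
    by (simp add: sum_0)
  also have "\<dots> = (\<Sum>j<K. \<Sum>k<K. g j k)"
    by (simp add: g_def inner_sum_left inner_sum_right sum_distrib_left mult.assoc)
       (subst sum.swap, simp add: inner_commute mult.left_commute)
  also have "\<dots> > 0"
  proof (rule sum_pos2[where i = 0])
    have "0 < g 0 1"
      using K pos[of 0] pos[of 1] off_diag[of 0 1] by (simp add: g_def)
    then show "0 < (\<Sum>k<K. g 0 k)"
      using K g_nonneg by (intro sum_pos2[where i = 1]) auto
  qed (use K g_nonneg in \<open>auto intro: sum_nonneg\<close>)
  finally show False by simp
qed

locale normalized_family =
  fixes K :: nat and w :: "'a::real_inner" and z :: "nat \<Rightarrow> 'a"
  assumes norm_w: "norm w = 1"
    and norm_z: "\<And>k. k < K \<Longrightarrow> z k = 0 \<or> norm (z k) = 1"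
begin

lemma corr_w_z: "k < K \<Longrightarrow> corr w (z k) = inner w (z k)"
  using norm_w norm_z by (intro corr_eq_inner) auto

lemma inner_shifted_eq:
  assumes "j < K" and "k < K"
  shows "inner (z j - a *\<^sub>R w) (z k - a *\<^sub>R w) =
    a\<^sup>2 - (corr w (z j) + corr w (z k)) * a + corr (z j) (z k)"
proof -
  have "inner w w = 1"
    using norm_w by (simp add: power2_norm_eq_inner[symmetric])
  moreover have "corr (z j) (z k) = inner (z j) (z k)"
    using assms norm_z by (intro corr_eq_inner) auto
  ultimately show ?thesis
    using assms by (simp add: corr_w_z inner_diff_left inner_diff_right inner_commute
        power2_eq_square algebra_simps)
qed

lemma inner_shifted_eq_0_iff:
  assumes "j < K" and "k < K"
  shows "inner (z j - a *\<^sub>R w) (z k - a *\<^sub>R w) = 0 \<longleftrightarrow>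
    0 \<le> Delta w z j k \<and> (a = lower_root w z j k \<or> a = upper_root w z j k)"
  unfolding inner_shifted_eq[OF assms] Delta_def lower_root_def upper_root_def
  by (rule monic_quadratic_eq_0_iff)

lemma Delta_nonneg_if_inner_shifted_nonpos:
  assumes "j < K" and "k < K" and "inner (z j - a *\<^sub>R w) (z k - a *\<^sub>R w) \<le> 0"
  shows "0 \<le> Delta w z j k"
proof -
  have "(corr w (z j) + corr w (z k) - 2 * a)\<^sup>2 \<le> Delta w z j k"
    using assms(3) unfolding inner_shifted_eq[OF assms(1,2)] Delta_def
    by (simp add: power2_eq_square algebra_simps)
  then show ?thesis
    by (meson order_trans zero_le_power2)
qed

lemma mem_orth_alphas_iff:
  "a \<in> orth_alphas K w z \<longleftrightarrow> (\<exists>j k. j < k \<and> k < K \<and> 0 \<le> Delta w z j k \<and>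
    (a = lower_root w z j k \<or> a = upper_root w z j k))"
proof
  assume "a \<in> orth_alphas K w z"
  then obtain j k where jk: "j < K" "k < K" "j \<noteq> k"
    and roots: "0 \<le> Delta w z j k \<and> (a = lower_root w z j k \<or> a = upper_root w z j k)"
    unfolding orth_alphas_def by (auto simp: inner_shifted_eq_0_iff)
  show "\<exists>j k. j < k \<and> k < K \<and> 0 \<le> Delta w z j k \<and>
      (a = lower_root w z j k \<or> a = upper_root w z j k)"
  proof (cases "j < k")
    case True
    with jk roots show ?thesis by blast
  next
    case False
    with jk roots show ?thesis
      by (intro exI[of _ k] exI[of _ j])
        (simp add: Delta_commute[of w z j k] lower_root_commute[of w z j k]
          upper_root_commute[of w z j k])
  qed
next
  assume "\<exists>j k. j < k \<and> k < K \<and> 0 \<le> Delta w z j k \<and>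
    (a = lower_root w z j k \<or> a = upper_root w z j k)"
  then obtain j k where "j < k" "k < K"
    and "0 \<le> Delta w z j k \<and> (a = lower_root w z j k \<or> a = upper_root w z j k)"
    by blast
  moreover have "j < K" "j \<noteq> k" using \<open>j < k\<close> \<open>k < K\<close> by simp_all
  ultimately have "j < K" "k < K" "j \<noteq> k" "inner (z j - a *\<^sub>R w) (z k - a *\<^sub>R w) = 0"
    by (simp_all add: inner_shifted_eq_0_iff)
  then show "a \<in> orth_alphas K w z"
    unfolding orth_alphas_def by blast
qed

lemma cand_alphas_subset_orth_alphas: "cand_alphas K w z \<subseteq> orth_alphas K w z"
proof
  fix a assume "a \<in> cand_alphas K w z"
  then obtain j k where "j < k" "k < K" "0 \<le> Delta w z j k" "a = lower_root w z j k"
    by (auto simp: cand_alphas_eq)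
  then show "a \<in> orth_alphas K w z"
    unfolding mem_orth_alphas_iff by blast
qed

lemma exists_Delta_nonneg:
  assumes K: "2 \<le> K" and w_sum: "w = (\<Sum>k<K. \<beta> k *\<^sub>R z k)"
    and pos: "\<And>k. k < K \<Longrightarrow> z k \<noteq> 0 \<Longrightarrow> 0 < \<beta> k"
  shows "\<exists>j k. j < k \<and> k < K \<and> 0 \<le> Delta w z j k"
proof -
  have "\<exists>j<K. \<exists>k<K. j \<noteq> k \<and> 0 \<le> Delta w z j k"
  proof (cases "\<exists>j<K. z j = 0")
    case True
    then obtain j where j: "j < K" "z j = 0" by blast
    define k where "k = (if j = 0 then 1 else 0 :: nat)"
    have "k < K" "j \<noteq> k" using K by (auto simp: k_def)
    moreover have "0 \<le> Delta w z j k" using j by (simp add: Delta_def corr_def)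
    ultimately show ?thesis using j by blast
  next
    case False
    then have \<beta>_pos: "\<And>k. k < K \<Longrightarrow> 0 < \<beta> k" using pos by blast
    define a where "a = 1 / (\<Sum>k<K. \<beta> k)"
    have "0 < (\<Sum>k<K. \<beta> k)"
      using K \<beta>_pos by (intro sum_pos) (auto simp: lessThan_empty_iff)
    then have "(\<Sum>k<K. \<beta> k *\<^sub>R (z k - a *\<^sub>R w)) = w - (\<Sum>k<K. \<beta> k * a) *\<^sub>R w"
      by (simp add: scaleR_diff_right sum_subtractf w_sum[symmetric] scaleR_sum_left)
    also have "\<dots> = 0"
      using \<open>0 < (\<Sum>k<K. \<beta> k)\<close> by (simp add: a_def sum_divide_distrib[symmetric])
    finally have "(\<Sum>k<K. \<beta> k *\<^sub>R (z k - a *\<^sub>R w)) = 0" .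
    from exists_inner_nonpos_pair[OF K \<beta>_pos this] obtain j k where "j < K" "k < K" "j \<noteq> k"
      and "inner (z j - a *\<^sub>R w) (z k - a *\<^sub>R w) \<le> 0"
      by blast
    then show ?thesis using Delta_nonneg_if_inner_shifted_nonpos[of j k a] by blast
  qed
  then obtain j k where jk: "j < K" "k < K" "j \<noteq> k" "0 \<le> Delta w z j k"
    by blast
  show ?thesis
  proof (cases "j < k")
    case True
    with jk show ?thesis by blast
  next
    case False
    with jk show ?thesis by (intro exI[of _ k] exI[of _ j]) (simp add: Delta_commute)
  qed
qed

lemma lower_root_dominates:
  assumes nonneg: "\<And>k. k < K \<Longrightarrow> 0 \<le> inner w (z k)" and b: "b \<in> orth_alphas K w z"
  obtains c where "c \<in> cand_alphas K w z" and "\<bar>c\<bar> \<le> \<bar>b\<bar>"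
    and "\<bar>b\<bar> \<le> \<bar>c\<bar> \<Longrightarrow> c = b \<or> (c = - b \<and> 0 < b)"
proof -
  obtain j k where jk: "j < k" "k < K" "0 \<le> Delta w z j k"
    and b_root: "b = lower_root w z j k \<or> b = upper_root w z j k"
    using b by (auto simp: mem_orth_alphas_iff)
  define s where "s = corr w (z j) + corr w (z k)"
  define t where "t = sqrt (Delta w z j k)"
  have "0 \<le> s" using jk nonneg by (simp add: s_def corr_w_z)
  moreover have "0 \<le> t" using jk by (simp add: t_def)
  moreover have c: "lower_root w z j k \<in> cand_alphas K w z"
    using jk by (auto simp: cand_alphas_eq)
  moreover have "lower_root w z j k = (s - t) / 2" "upper_root w z j k = (s + t) / 2"
    by (simp_all add: lower_root_def upper_root_def s_def t_def)
  ultimately have c': "(s - t) / 2 \<in> cand_alphas K w z"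
    and b_root': "b = (s - t) / 2 \<or> b = (s + t) / 2"
    using b_root by auto
  show thesis
  proof (cases "b = (s - t) / 2")
    case True
    then show thesis using that[OF c'] by simp
  next
    case False
    with b_root' have b_upper: "b = (s + t) / 2" by blast
    show thesis
    proof (rule that[OF c'])
      show "\<bar>(s - t) / 2\<bar> \<le> \<bar>b\<bar>"
        using b_upper abs_diff_le_add(1)[OF \<open>0 \<le> s\<close> \<open>0 \<le> t\<close>] by simp
      assume "\<bar>b\<bar> \<le> \<bar>(s - t) / 2\<bar>"
      then have "t = 0 \<or> (s = 0 \<and> 0 < t)"
        using b_upper abs_diff_le_add(2)[OF \<open>0 \<le> s\<close> \<open>0 \<le> t\<close>] by simp
      then show "(s - t) / 2 = b \<or> ((s - t) / 2 = - b \<and> 0 < b)"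
        using b_upper by auto
    qed
  qed
qed

lemma is_alpha_exists:
  assumes nonneg: "\<And>k. k < K \<Longrightarrow> 0 \<le> inner w (z k)"
    and pair: "\<exists>j k. j < k \<and> k < K \<and> 0 \<le> Delta w z j k"
  shows "\<exists>a. is_alpha K w z a"
proof -
  have ne: "cand_alphas K w z \<noteq> {}"
    using pair by (auto simp: cand_alphas_eq)
  define m where "m = arg_min_on abs (cand_alphas K w z)"
  have m: "m \<in> cand_alphas K w z"
    unfolding m_def by (rule arg_min_if_finite(1)[OF finite_cand_alphas ne])
  have m_min: "\<bar>m\<bar> \<le> \<bar>c\<bar>" if "c \<in> cand_alphas K w z" for c
    unfolding m_def by (rule arg_min_least[OF finite_cand_alphas ne that])
  have m_orth: "m \<in> orth_alphas K w z"
    using m cand_alphas_subset_orth_alphas by blast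
  have m_min_orth: "\<bar>m\<bar> \<le> \<bar>b\<bar>" if b: "b \<in> orth_alphas K w z" for b
  proof -
    obtain c where "c \<in> cand_alphas K w z" "\<bar>c\<bar> \<le> \<bar>b\<bar>"
      and "\<bar>b\<bar> \<le> \<bar>c\<bar> \<Longrightarrow> c = b \<or> (c = - b \<and> 0 < b)"
      using lower_root_dominates[OF nonneg b] by blast
    with m_min show ?thesis by force
  qed
  show ?thesis
  proof (cases "- \<bar>m\<bar> \<in> orth_alphas K w z")
    case True
    then have "is_alpha K w z (- \<bar>m\<bar>)"
      unfolding is_alpha_def using m_min_orth by simp
    then show ?thesis ..
  next
    case False
    have "0 \<le> m"
    proof (rule ccontr)
      assume "\<not> 0 \<le> m"
      then have "- \<bar>m\<bar> = m" by simp
      with m_orth False show False by simp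
    qed
    then have "is_alpha K w z m"
      unfolding is_alpha_def using False m_orth m_min_orth by simp
    then show ?thesis ..
  qed
qed

lemma is_alpha_imp_min_cand_alpha:
  assumes nonneg: "\<And>k. k < K \<Longrightarrow> 0 \<le> inner w (z k)" and a: "is_alpha K w z a"
  shows "a \<in> cand_alphas K w z \<and> (\<forall>b \<in> cand_alphas K w z. \<bar>a\<bar> \<le> \<bar>b\<bar>)"
proof -
  have a_orth: "a \<in> orth_alphas K w z"
    and a_min: "\<And>b. b \<in> orth_alphas K w z \<Longrightarrow> \<bar>a\<bar> \<le> \<bar>b\<bar>"
    and tie: "a \<noteq> 0 \<Longrightarrow> - a \<in> orth_alphas K w z \<Longrightarrow> a < 0"
    using a by (auto simp: is_alpha_def)
  obtain c where c: "c \<in> cand_alphas K w z"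
    and c_eq: "\<bar>a\<bar> \<le> \<bar>c\<bar> \<Longrightarrow> c = a \<or> (c = - a \<and> 0 < a)"
    using lower_root_dominates[OF nonneg a_orth] by blast
  have "\<bar>a\<bar> \<le> \<bar>c\<bar>"
    using a_min c cand_alphas_subset_orth_alphas by blast
  have "c = a"
  proof (rule ccontr)
    assume "c \<noteq> a"
    with c_eq \<open>\<bar>a\<bar> \<le> \<bar>c\<bar>\<close> have "c = - a" and "0 < a" by auto
    moreover from \<open>c = - a\<close> c cand_alphas_subset_orth_alphas
    have "- a \<in> orth_alphas K w z" by auto
    ultimately show False using tie by fastforce
  qed
  then show ?thesis
    using c a_min cand_alphas_subset_orth_alphas by blast
qed

end

text \<open>Enumerating I turns \<eta> into a square matrix A with A A^T = 1, hence A^T A = 1.\<close>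

lemma orthonormal_rows_imp_orthonormal_cols:
  fixes \<eta> :: "nat \<Rightarrow> 'i \<Rightarrow> real"
  assumes fin: "finite I"
    and orth: "\<And>m n. m < card I \<Longrightarrow> n < card I \<Longrightarrow>
      (\<Sum>q\<in>I. \<eta> m q * \<eta> n q) = (if m = n then 1 else 0)"
    and q: "q \<in> I" "q' \<in> I"
  shows "(\<Sum>m<card I. \<eta> m q * \<eta> m q') = (if q = q' then 1 else 0)"
proof -
  define N where "N = card I"
  obtain h where h: "bij_betw h I {0..<N}"
    using ex_bij_betw_finite_nat[OF fin] unfolding N_def by blast
  define g where "g = inv_into I h"
  have g: "bij_betw g {0..<N} I" unfolding g_def using h by (rule bij_betw_inv_into)
  define A :: "real mat" where "A = mat N N (\<lambda>(m, i). \<eta> m (g i))"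
  have A: "A \<in> carrier_mat N N" unfolding A_def by simp
  have AT: "transpose_mat A \<in> carrier_mat N N" using A by simp
  have "A * transpose_mat A = 1\<^sub>m N"
  proof (rule eq_matI)
    fix m n assume "m < dim_row (1\<^sub>m N :: real mat)" "n < dim_col (1\<^sub>m N :: real mat)"
    then have mn: "m < N" "n < N" by auto
    have "(A * transpose_mat A) $$ (m, n) = (\<Sum>i<N. \<eta> m (g i) * \<eta> n (g i))"
      using mn A by (simp add: A_def scalar_prod_def lessThan_atLeast0)
    also have "\<dots> = (\<Sum>q\<in>I. \<eta> m q * \<eta> n q)"
      using sum.reindex_bij_betw[OF g, of "\<lambda>q. \<eta> m q * \<eta> n q"]
      by (simp add: lessThan_atLeast0)
    also have "\<dots> = (if m = n then 1 else 0)" using orth mn unfolding N_def by simp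
    finally show "(A * transpose_mat A) $$ (m, n) = 1\<^sub>m N $$ (m, n)" using mn by simp
  qed (use A in auto)
  then have AT_A: "transpose_mat A * A = 1\<^sub>m N"
    by (rule mat_mult_left_right_inverse[OF A AT])
  have hq: "h q < N" "h q' < N" using h q by (auto simp: bij_betw_def)
  have gh: "g (h q) = q" "g (h q') = q'" unfolding g_def using h q by (auto simp: bij_betw_def)
  have "(transpose_mat A * A) $$ (h q, h q') = (\<Sum>m<N. \<eta> m q * \<eta> m q')"
    using hq gh A by (simp add: A_def scalar_prod_def lessThan_atLeast0)
  moreover have "h q = h q' \<longleftrightarrow> q = q'" using h q by (auto simp: bij_betw_def inj_on_def)
  ultimately show ?thesis using AT_A hq unfolding N_def by simp
qed

lemma inner_sum_orthonormal:
  fixes u :: "nat \<Rightarrow> 'a::real_inner"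
  assumes "\<And>i j. i < n \<Longrightarrow> j < n \<Longrightarrow> inner (u i) (u j) = (if i = j then 1 else 0)"
  shows "inner (\<Sum>i<n. a i *\<^sub>R u i) (\<Sum>j<n. c j *\<^sub>R u j) = (\<Sum>i<n. a i * c i)"
proof -
  have "inner (\<Sum>i<n. a i *\<^sub>R u i) (\<Sum>j<n. c j *\<^sub>R u j) =
      (\<Sum>i<n. \<Sum>j<n. a i * c j * inner (u i) (u j))"
    by (simp add: inner_sum_left inner_sum_right sum_distrib_left mult.assoc)
      (subst sum.swap, simp add: mult.left_commute)
  also have "\<dots> = (\<Sum>i<n. \<Sum>j<n. if i = j then a i * c j else 0)"
    by (intro sum.cong refl) (simp add: assms)
  finally show ?thesis by simp
qed

lemma inner_gram_eigencombination:
  fixes F :: "'i \<Rightarrow> 'a::real_inner"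
  assumes "(\<Sum>q'\<in>I. inner (F q) (F q') * e q') = \<mu> * e q"
  shows "inner (\<Sum>q'\<in>I. e q' *\<^sub>R F q') (F q) = \<mu> * e q"
  unfolding assms[symmetric] inner_sum_left
  by (intro sum.cong refl) (simp add: inner_commute mult.commute)

lemma inner_gram_eigencombination_self:
  fixes F :: "'i \<Rightarrow> 'a::real_inner"
  assumes "\<And>q. q \<in> I \<Longrightarrow> (\<Sum>q'\<in>I. inner (F q) (F q') * e q') = \<mu> * e q"
    and "(\<Sum>q\<in>I. e q * e q) = 1"
  shows "inner (\<Sum>q\<in>I. e q *\<^sub>R F q) (\<Sum>q\<in>I. e q *\<^sub>R F q) = \<mu>"
proof -
  have "inner (\<Sum>q\<in>I. e q *\<^sub>R F q) (\<Sum>q\<in>I. e q *\<^sub>R F q) =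
      (\<Sum>q\<in>I. e q * inner (\<Sum>q'\<in>I. e q' *\<^sub>R F q') (F q))"
    by (simp add: inner_sum_right)
  also have "\<dots> = (\<Sum>q\<in>I. \<mu> * (e q * e q))"
    using assms(1) by (intro sum.cong refl) (simp add: inner_gram_eigencombination)
  finally show ?thesis using assms(2) by (simp add: sum_distrib_left[symmetric])
qed

lemma dim_image_le_card:
  assumes "finite I"
  shows "dim (F ` I) \<le> card I"
  using assms dim_le_card'[of "F ` I"] card_image_le[OF assms, of F] by simp

text \<open>The eigencombinations of a Gram matrix span the same space as the vectors: if the
  eigenvalue with index l were not positive, all later eigencombinations would vanish and the
  vectors would lie in the span of the first l of them.\<close>

lemma gram_eigenvalue_pos:
  fixes F :: "'i \<Rightarrow> 'a::real_inner" and \<eta> :: "nat \<Rightarrow> 'i \<Rightarrow> real"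
  assumes fin: "finite I"
    and orth: "\<And>m n. m < card I \<Longrightarrow> n < card I \<Longrightarrow>
      (\<Sum>q\<in>I. \<eta> m q * \<eta> n q) = (if m = n then 1 else 0)"
    and eig: "\<And>m q. m < card I \<Longrightarrow> q \<in> I \<Longrightarrow>
      (\<Sum>q'\<in>I. inner (F q) (F q') * \<eta> m q') = \<mu> m * \<eta> m q"
    and sorted: "\<And>m n. m \<le> n \<Longrightarrow> n < card I \<Longrightarrow> \<mu> n \<le> \<mu> m"
    and rank: "l < dim (F ` I)"
  shows "0 < \<mu> l"
proof (rule ccontr)
  assume "\<not> 0 < \<mu> l"
  define v where "v m = (\<Sum>q\<in>I. \<eta> m q *\<^sub>R F q)" for m
  have "l < card I"
    using rank dim_image_le_card[OF fin, of F] by simp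
  have v_0: "v m = 0" if "l \<le> m" "m < card I" for m
  proof -
    have "inner (v m) (v m) = \<mu> m"
      unfolding v_def using that eig orth by (intro inner_gram_eigencombination_self) auto
    moreover have "\<mu> m \<le> 0" using sorted[OF that] \<open>\<not> 0 < \<mu> l\<close> by simp
    ultimately show ?thesis by (metis inner_ge_zero inner_eq_zero_iff order_antisym)
  qed
  have "F q \<in> span (v ` {..<l})" if q: "q \<in> I" for q
  proof -
    have "(\<Sum>m<card I. \<eta> m q *\<^sub>R v m) = (\<Sum>q'\<in>I. (\<Sum>m<card I. \<eta> m q * \<eta> m q') *\<^sub>R F q')"
      by (simp add: v_def scaleR_sum_right scaleR_sum_left sum.swap[of _ "{..<card I}"])
    also have "\<dots> = (\<Sum>q'\<in>I. if q = q' then F q' else 0)"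
      using orthonormal_rows_imp_orthonormal_cols[OF fin orth q] by (intro sum.cong refl) simp
    also have "\<dots> = F q"
      using fin q by simp
    finally have "F q = (\<Sum>m<card I. \<eta> m q *\<^sub>R v m)" by simp
    also have "\<dots> = (\<Sum>m<l. \<eta> m q *\<^sub>R v m)"
      using \<open>l < card I\<close> v_0 by (intro sum.mono_neutral_right) auto
    also have "\<dots> \<in> span (v ` {..<l})"
      by (intro span_sum span_scale span_base) auto
    finally show ?thesis .
  qed
  then have "dim (F ` I) \<le> card (v ` {..<l})"
    by (intro dim_le_card) auto
  also have "\<dots> \<le> l"
    using card_image_le[of "{..<l}" v] by simp
  finally show False using rank by simp
qed

lemma span_UN_cong:
  fixes S T :: "'i \<Rightarrow> 'a::real_vector set"
  assumes "\<And>k. k \<in> A \<Longrightarrow> span (S k) = span (T k)"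
  shows "span (\<Union>k\<in>A. S k) = span (\<Union>k\<in>A. T k)"
proof -
  have sub: "S' k \<subseteq> span (\<Union>k\<in>A. T' k)"
    if "\<And>k. k \<in> A \<Longrightarrow> span (S' k) = span (T' k)" and "k \<in> A"
    for S' T' :: "'i \<Rightarrow> 'a set" and k
  proof -
    have "S' k \<subseteq> span (S' k)" by (rule span_superset)
    also have "\<dots> = span (T' k)" using that by blast
    also have "\<dots> \<subseteq> span (\<Union>k\<in>A. T' k)" using that(2) by (intro span_mono) blast
    finally show ?thesis .
  qed
  have "(\<Union>k\<in>A. S k) \<subseteq> span (\<Union>k\<in>A. T k)" using sub[of S T] assms by blast
  moreover have "(\<Union>k\<in>A. T k) \<subseteq> span (\<Union>k\<in>A. S k)" using sub[of T S] assms by blast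
  ultimately show ?thesis unfolding span_eq by blast
qed

lemma finite_idx: "finite (idx K r)"
  by (simp add: idx_def)

lemma sum_idx: "(\<Sum>q\<in>idx K r. g q) = (\<Sum>k<K. \<Sum>i<r k. g (k, i))"
proof -
  have "(\<Sum>k<K. \<Sum>i<r k. g (k, i)) = (\<Sum>(k, i)\<in>Sigma {..<K} (\<lambda>k. {..<r k}). g (k, i))"
    by (rule sum.Sigma) auto
  then show ?thesis by (simp add: idx_def)
qed

lemma dim_span_blocks:
  assumes "\<And>k. k < K \<Longrightarrow> span {f k i | i. i < r k} = span {x k i | i. i < p k}"
  shows "dim (span (\<Union>k<K. {x k i | i. i < p k})) = dim ((\<lambda>q. f (fst q) (snd q)) ` idx K r)"
proof -
  have "(\<lambda>q. f (fst q) (snd q)) ` idx K r = (\<Union>k<K. {f k i | i. i < r k})"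
    unfolding idx_def by force
  moreover have "span (\<Union>k<K. {f k i | i. i < r k}) = span (\<Union>k<K. {x k i | i. i < p k})"
    using assms by (intro span_UN_cong) auto
  ultimately show ?thesis by (metis dim_span)
qed

lemma blocknorm_pos_iff: "0 < blocknorm r e k \<longleftrightarrow> (\<exists>i<r k. e (k, i) \<noteq> 0)"
proof -
  have "0 \<le> (\<Sum>i<r k. (e (k, i))\<^sup>2)" by (intro sum_nonneg) simp
  moreover have "(\<Sum>i<r k. (e (k, i))\<^sup>2) = 0 \<longleftrightarrow> (\<forall>i\<in>{..<r k}. e (k, i) = 0)"
    by (simp add: sum_nonneg_eq_0_iff)
  ultimately show ?thesis
    unfolding blocknorm_def by (auto simp: less_le)
qed

lemma blocknorm_squared: "(blocknorm r e k)\<^sup>2 = (\<Sum>i<r k. (e (k, i))\<^sup>2)"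
  by (simp add: blocknorm_def sum_nonneg)

lemma zvec_neq_0_imp_blocknorm_pos: "zvec r f e k \<noteq> 0 \<Longrightarrow> 0 < blocknorm r e k"
  by (auto simp: zvec_def blocknorm_pos_iff split: if_splits)

lemma scaleR_blocknorm_zvec:
  "blocknorm r e k *\<^sub>R zvec r f e k = (\<Sum>i<r k. e (k, i) *\<^sub>R f k i)"
proof (cases "\<forall>i<r k. e (k, i) = 0")
  case True
  then show ?thesis by (simp add: zvec_def)
next
  case False
  then have "blocknorm r e k \<noteq> 0" using blocknorm_pos_iff[of r e k] by auto
  with False show ?thesis by (simp add: zvec_def scaleR_sum_right)
qed

lemma wvec_eq_sum_zvec:
  "wvec K r f \<mu> e = (\<Sum>k<K. (inverse (sqrt \<mu>) * blocknorm r e k) *\<^sub>R zvec r f e k)"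
proof -
  have "wvec K r f \<mu> e = inverse (sqrt \<mu>) *\<^sub>R (\<Sum>k<K. \<Sum>i<r k. e (k, i) *\<^sub>R f k i)"
    by (simp add: wvec_def sum_idx)
  also have "\<dots> = (\<Sum>k<K. inverse (sqrt \<mu>) *\<^sub>R (blocknorm r e k *\<^sub>R zvec r f e k))"
    by (simp only: scaleR_blocknorm_zvec scaleR_sum_right)
  finally show ?thesis by simp
qed

lemma norm_zvec:
  assumes "\<And>i i'. i < r k \<Longrightarrow> i' < r k \<Longrightarrow> inner (f k i) (f k i') = (if i = i' then 1 else 0)"
  shows "zvec r f e k = 0 \<or> norm (zvec r f e k) = 1"
proof (cases "zvec r f e k = 0")
  case False
  then have pos: "0 < blocknorm r e k" by (rule zvec_neq_0_imp_blocknorm_pos)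
  have "(blocknorm r e k)\<^sup>2 * inner (zvec r f e k) (zvec r f e k) =
      inner (blocknorm r e k *\<^sub>R zvec r f e k) (blocknorm r e k *\<^sub>R zvec r f e k)"
    by (simp add: power2_eq_square)
  also have "\<dots> = (\<Sum>i<r k. (e (k, i))\<^sup>2)"
    by (simp add: scaleR_blocknorm_zvec inner_sum_orthonormal assms power2_eq_square)
  also have "\<dots> = (blocknorm r e k)\<^sup>2"
    by (rule blocknorm_squared[symmetric])
  finally have "inner (zvec r f e k) (zvec r f e k) = 1"
    using pos by simp
  then show ?thesis by (simp add: norm_eq_sqrt_inner)
qed simp

lemma inner_wvec_block:
  assumes eig: "\<And>q. q \<in> idx K r \<Longrightarrow> (\<Sum>q'\<in>idx K r. covf f q q' * e q') = \<mu> * e q"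
    and "k < K" and "i < r k"
  shows "inner (wvec K r f \<mu> e) (f k i) = inverse (sqrt \<mu>) * (\<mu> * e (k, i))"
proof -
  have "(k, i) \<in> idx K r" using assms(2,3) by (simp add: idx_def)
  then have "(\<Sum>q'\<in>idx K r. inner (f k i) (f (fst q') (snd q')) * e q') = \<mu> * e (k, i)"
    using eig[of "(k, i)"] by (simp add: covf_def)
  then have "inner (\<Sum>q\<in>idx K r. e q *\<^sub>R f (fst q) (snd q)) (f k i) = \<mu> * e (k, i)"
    using inner_gram_eigencombination[where F = "\<lambda>q. f (fst q) (snd q)" and q = "(k, i)"
        and I = "idx K r" and e = e and \<mu> = \<mu>]
    by simp
  then show ?thesis by (simp add: wvec_def)
qed

lemma inner_wvec_zvec_nonneg:
  assumes "0 < \<mu>"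
    and eig: "\<And>q. q \<in> idx K r \<Longrightarrow> (\<Sum>q'\<in>idx K r. covf f q q' * e q') = \<mu> * e q"
    and "k < K"
  shows "0 \<le> inner (wvec K r f \<mu> e) (zvec r f e k)"
proof (cases "zvec r f e k = 0")
  case False
  then have pos: "0 < blocknorm r e k" by (rule zvec_neq_0_imp_blocknorm_pos)
  have "blocknorm r e k * inner (wvec K r f \<mu> e) (zvec r f e k) =
      inner (wvec K r f \<mu> e) (blocknorm r e k *\<^sub>R zvec r f e k)"
    by simp
  also have "\<dots> = (\<Sum>i<r k. e (k, i) * inner (wvec K r f \<mu> e) (f k i))"
    by (simp only: scaleR_blocknorm_zvec inner_sum_right inner_scaleR_right)
  also have "\<dots> = (\<Sum>i<r k. inverse (sqrt \<mu>) * \<mu> * (e (k, i))\<^sup>2)"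
    using eig \<open>k < K\<close> by (intro sum.cong refl) (simp add: inner_wvec_block power2_eq_square)
  also have "\<dots> \<ge> 0"
    using \<open>0 < \<mu>\<close> by (intro sum_nonneg) simp
  finally show ?thesis
    using pos by (simp add: zero_le_mult_iff)
qed simp

lemma norm_wvec:
  assumes "0 < \<mu>"
    and eig: "\<And>q. q \<in> idx K r \<Longrightarrow> (\<Sum>q'\<in>idx K r. covf f q q' * e q') = \<mu> * e q"
    and unit: "(\<Sum>q\<in>idx K r. e q * e q) = 1"
  shows "norm (wvec K r f \<mu> e) = 1"
proof -
  have "inner (\<Sum>q\<in>idx K r. e q *\<^sub>R f (fst q) (snd q)) (\<Sum>q\<in>idx K r. e q *\<^sub>R f (fst q) (snd q)) = \<mu>"
    using eig unit by (intro inner_gram_eigencombination_self) (simp_all add: covf_def)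
  then have "inner (wvec K r f \<mu> e) (wvec K r f \<mu> e) = (inverse (sqrt \<mu>))\<^sup>2 * \<mu>"
    by (simp add: wvec_def power2_eq_square algebra_simps)
  also have "\<dots> = 1"
    using \<open>0 < \<mu>\<close> by (simp add: power_inverse)
  finally have "inner (wvec K r f \<mu> e) (wvec K r f \<mu> e) = 1" .
  then show ?thesis by (simp add: norm_eq_sqrt_inner)
qed

theorem theorem2:
  fixes K :: nat
    and p r :: "nat \<Rightarrow> nat"
    and x f :: "nat \<Rightarrow> nat \<Rightarrow> 'a::real_inner"
    and rf :: nat
    and eta :: "nat \<Rightarrow> nat \<times> nat \<Rightarrow> real"
    and lam :: "nat \<Rightarrow> real"
    and l :: nat
  assumes K2: "K \<ge> 2"
    and r_dim: "\<And>k. k < K \<Longrightarrow> r k = dim (span {x k i | i. i < p k})"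
    and r_pos: "\<And>k. k < K \<Longrightarrow> r k \<ge> 1"
    and rf_def: "rf = dim (span (\<Union>k<K. {x k i | i. i < p k}))"
    and f_orth: "\<And>k i i'. k < K \<Longrightarrow> i < r k \<Longrightarrow> i' < r k \<Longrightarrow>
                   inner (f k i) (f k i') = (if i = i' then 1 else 0)"
    and f_span: "\<And>k. k < K \<Longrightarrow> span {f k i | i. i < r k} = span {x k i | i. i < p k}"
    and eta_orth: "\<And>m n. m < card (idx K r) \<Longrightarrow> n < card (idx K r) \<Longrightarrow>
                   (\<Sum>q\<in>idx K r. eta m q * eta n q) = (if m = n then 1 else 0)"
    and eta_eig: "\<And>m q. m < card (idx K r) \<Longrightarrow> q \<in> idx K r \<Longrightarrow>
                   (\<Sum>q'\<in>idx K r. covf f q q' * eta m q') = lam m * eta m q"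
    and lam_sorted: "\<And>m n. m \<le> n \<Longrightarrow> n < card (idx K r) \<Longrightarrow> lam n \<le> lam m"
    and l_le: "l < rf"
  shows "(\<exists>j k. j < k \<and> k < K \<and>
            Delta (wvec K r f (lam l) (eta l)) (zvec r f (eta l)) j k \<ge> 0)
       \<and> (\<exists>a. is_alpha K (wvec K r f (lam l) (eta l)) (zvec r f (eta l)) a)
       \<and> (\<forall>a. is_alpha K (wvec K r f (lam l) (eta l)) (zvec r f (eta l)) a \<longrightarrow>
            a \<in> cand_alphas K (wvec K r f (lam l) (eta l)) (zvec r f (eta l)) \<and>
            (\<forall>b \<in> cand_alphas K (wvec K r f (lam l) (eta l)) (zvec r f (eta l)). \<bar>a\<bar> \<le> \<bar>b\<bar>))"
proof -
  define w z where "w = wvec K r f (lam l) (eta l)" and "z = zvec r f (eta l)"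
  have "rf = dim ((\<lambda>q. f (fst q) (snd q)) ` idx K r)"
    unfolding rf_def by (rule dim_span_blocks[OF f_span])
  with l_le have rank: "l < dim ((\<lambda>q. f (fst q) (snd q)) ` idx K r)" by simp
  then have l_card: "l < card (idx K r)"
    using dim_image_le_card[OF finite_idx] order_less_le_trans by blast
  have lam_pos: "0 < lam l"
    using finite_idx eta_orth eta_eig lam_sorted rank
    by (intro gram_eigenvalue_pos[where \<eta> = eta]) (simp_all add: covf_def)
  interpret normalized_family K w z
  proof
    show "norm w = 1"
      unfolding w_def using lam_pos eta_eig[OF l_card] eta_orth[OF l_card l_card]
      by (intro norm_wvec) simp_all
    show "z k = 0 \<or> norm (z k) = 1" if "k < K" for k
      unfolding z_def using f_orth[OF that] by (rule norm_zvec)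
  qed
  have nonneg: "\<And>k. k < K \<Longrightarrow> 0 \<le> inner w (z k)"
    unfolding w_def z_def using lam_pos eta_eig[OF l_card] by (intro inner_wvec_zvec_nonneg)
  have pair: "\<exists>j k. j < k \<and> k < K \<and> 0 \<le> Delta w z j k"
  proof (rule exists_Delta_nonneg[OF K2])
    show "w = (\<Sum>k<K. (inverse (sqrt (lam l)) * blocknorm r (eta l) k) *\<^sub>R z k)"
      unfolding w_def z_def by (rule wvec_eq_sum_zvec)
    show "0 < inverse (sqrt (lam l)) * blocknorm r (eta l) k" if "z k \<noteq> 0" for k
      using lam_pos zvec_neq_0_imp_blocknorm_pos[of r f "eta l" k] that unfolding z_def by simp
  qed
  show ?thesis
    using pair is_alpha_exists[OF nonneg pair] is_alpha_imp_min_cand_alpha[OF nonneg]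
    unfolding w_def z_def by blast
qed

end
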